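(* Let $M>0$, $D\in\mathbb{N}$, $l=2D$, and $c\in\mathbb{R}^D$ with $\|c\|_\infty\le M/2$. Let $H\in\mathbb{R}^{5\times l}$ be the structured embedding matrix whose first row is $(x^1,\dots,x^D,0,\dots,0)$ and second row is zero, with $\|H\|_\infty\le M/2$. Then there is a transformer block $\mathrm{B}$ with $D$ attention heads and a feed-forward layer of depth $3$, with all parameters bounded in absolute value by $O(lM)$, such that $\mathrm{B}(H)$ is the structured embedding matrix whose first row is $(x^1,\dots,x^D,x^1-c^1,\dots,x^D-c^D)$ and whose second row is zero (rows $3$–$5$ unchanged).
   Context: $\sigma(x)=\max(0,x)$. An attention head with $Q,K,V\in\mathbb{R}^{5\times5}$ maps $H=[h_1,\dots,h_l]$ to the matrix whose $i$-th column is $\sum_{k=1}^l\sigma(\langle Qh_i,Kh_k\rangle)Vh_k$; a multi-head attention layer $\mathrm{MHA}$ is a sum of attention heads; a feed-forward layer of depth $L$ is $h\mapsto W_L\sigma(\cdots\sigma(W_1h+b_1)\cdots)+b_L$ applied column-wise; a transformer block is $\mathrm{B}(H)=\mathrm{FFN}(\mathrm{MHA}(H)+H)+\mathrm{MHA}(H)+H$. A structured embedding matrix $H\in\mathbb{R}^{5\times l}$ has $t$-th column with entries $(h_t^3,h_t^4)=\mathcal{I}_t=(\cos(\tfrac{t}{l}\tfrac{\pi}{2}),\sin(\tfrac{t}{l}\tfrac{\pi}{2}))$ and $h_t^5=1$. $\|H\|_\infty$ is the maximal absolute entry. *)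

theory Defs
  imports Complex_Main
begin

text \<open>A 5 x l matrix is a function H :: nat => nat => real, where
  H r t is the entry in row r+1 (r = 0..4) and column t (t = 1..l).
  Vectors in R^n are functions nat => real read on indices 0..n-1;
  matrices with n columns act via mv n.\<close>

definition relu :: "real \<Rightarrow> real" where
  "relu x = max 0 x"

definition mv :: "nat \<Rightarrow> (nat \<Rightarrow> nat \<Rightarrow> real) \<Rightarrow> (nat \<Rightarrow> real) \<Rightarrow> (nat \<Rightarrow> real)" where
  "mv n W v = (\<lambda>i. \<Sum>j<n. W i j * v j)"

definition col :: "(nat \<Rightarrow> nat \<Rightarrow> real) \<Rightarrow> nat \<Rightarrow> (nat \<Rightarrow> real)" where
  "col H t = (\<lambda>r. H r t)"

definition attn_head ::
  "(nat \<Rightarrow> nat \<Rightarrow> real) \<times> (nat \<Rightarrow> nat \<Rightarrow> real) \<times> (nat \<Rightarrow> nat \<Rightarrow> real)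
    \<Rightarrow> nat \<Rightarrow> (nat \<Rightarrow> nat \<Rightarrow> real) \<Rightarrow> (nat \<Rightarrow> nat \<Rightarrow> real)" where
  "attn_head P l H = (case P of (Q, K, V) \<Rightarrow>
     (\<lambda>r i. \<Sum>k=1..l. relu (\<Sum>s<5. mv 5 Q (col H i) s * mv 5 K (col H k) s)
                        * mv 5 V (col H k) r))"

definition mha ::
  "((nat \<Rightarrow> nat \<Rightarrow> real) \<times> (nat \<Rightarrow> nat \<Rightarrow> real) \<times> (nat \<Rightarrow> nat \<Rightarrow> real)) list
    \<Rightarrow> nat \<Rightarrow> (nat \<Rightarrow> nat \<Rightarrow> real) \<Rightarrow> (nat \<Rightarrow> nat \<Rightarrow> real)" where
  "mha heads l H = (\<lambda>r i. \<Sum>P\<leftarrow>heads. attn_head P l H r i)"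

definition ffn3 ::
  "nat \<Rightarrow> nat \<Rightarrow> (nat \<Rightarrow> nat \<Rightarrow> real) \<Rightarrow> (nat \<Rightarrow> real) \<Rightarrow> (nat \<Rightarrow> nat \<Rightarrow> real) \<Rightarrow> (nat \<Rightarrow> real)
    \<Rightarrow> (nat \<Rightarrow> nat \<Rightarrow> real) \<Rightarrow> (nat \<Rightarrow> real) \<Rightarrow> (nat \<Rightarrow> real) \<Rightarrow> (nat \<Rightarrow> real)" where
  "ffn3 n1 n2 W1 b1 W2 b2 W3 b3 v =
     (\<lambda>i. mv n2 W3 (\<lambda>j. relu (mv n1 W2 (\<lambda>k. relu (mv 5 W1 v k + b1 k)) j + b2 j)) i + b3 i)"

definition tblock ::
  "((nat \<Rightarrow> nat \<Rightarrow> real) \<times> (nat \<Rightarrow> nat \<Rightarrow> real) \<times> (nat \<Rightarrow> nat \<Rightarrow> real)) list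
    \<Rightarrow> nat \<Rightarrow> nat \<Rightarrow> (nat \<Rightarrow> nat \<Rightarrow> real) \<Rightarrow> (nat \<Rightarrow> real) \<Rightarrow> (nat \<Rightarrow> nat \<Rightarrow> real) \<Rightarrow> (nat \<Rightarrow> real)
    \<Rightarrow> (nat \<Rightarrow> nat \<Rightarrow> real) \<Rightarrow> (nat \<Rightarrow> real)
    \<Rightarrow> nat \<Rightarrow> (nat \<Rightarrow> nat \<Rightarrow> real) \<Rightarrow> (nat \<Rightarrow> nat \<Rightarrow> real)" where
  "tblock heads n1 n2 W1 b1 W2 b2 W3 b3 l H =
     (let A = (\<lambda>r t. mha heads l H r t + H r t)
      in (\<lambda>r t. ffn3 n1 n2 W1 b1 W2 b2 W3 b3 (col A t) r + A r t))"

definition struct_emb :: "nat \<Rightarrow> (nat \<Rightarrow> real) \<Rightarrow> (nat \<Rightarrow> nat \<Rightarrow> real)" where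
  "struct_emb l y = (\<lambda>r t.
     if r = 0 then y t
     else if r = 1 then 0
     else if r = 2 then cos (real t / real l * (pi / 2))
     else if r = 3 then sin (real t / real l * (pi / 2))
     else 1)"

definition maxnorm :: "nat \<Rightarrow> (nat \<Rightarrow> nat \<Rightarrow> real) \<Rightarrow> real" where
  "maxnorm l H = Max ({0} \<union> {\<bar>H r t\<bar> | r t. r < 5 \<and> t \<in> {1..l}})"

definition params_bounded ::
  "real \<Rightarrow> ((nat \<Rightarrow> nat \<Rightarrow> real) \<times> (nat \<Rightarrow> nat \<Rightarrow> real) \<times> (nat \<Rightarrow> nat \<Rightarrow> real)) list
    \<Rightarrow> nat \<Rightarrow> nat \<Rightarrow> (nat \<Rightarrow> nat \<Rightarrow> real) \<Rightarrow> (nat \<Rightarrow> real) \<Rightarrow> (nat \<Rightarrow> nat \<Rightarrow> real) \<Rightarrow> (nat \<Rightarrow> real)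
    \<Rightarrow> (nat \<Rightarrow> nat \<Rightarrow> real) \<Rightarrow> (nat \<Rightarrow> real) \<Rightarrow> bool" where
  "params_bounded B heads n1 n2 W1 b1 W2 b2 W3 b3 \<longleftrightarrow>
     (\<forall>(Q, K, V) \<in> set heads. \<forall>r<5. \<forall>s<5. \<bar>Q r s\<bar> \<le> B \<and> \<bar>K r s\<bar> \<le> B \<and> \<bar>V r s\<bar> \<le> B) \<and>
     (\<forall>i<n1. (\<forall>j<5. \<bar>W1 i j\<bar> \<le> B) \<and> \<bar>b1 i\<bar> \<le> B) \<and>
     (\<forall>i<n2. (\<forall>j<n1. \<bar>W2 i j\<bar> \<le> B) \<and> \<bar>b2 i\<bar> \<le> B) \<and>
     (\<forall>i<5. (\<forall>j<n2. \<bar>W3 i j\<bar> \<le> B) \<and> \<bar>b3 i\<bar> \<le> B)"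

end

theory Submission imports Defs begin

text \<open>Head k lets column D+k attend only to column k: its score is
  M^2 ((cos(\<theta>_i - \<theta>_(D+k)) - 1) + (cos(\<theta>_j - \<theta>_k) - 1 + \<epsilon>)) with \<theta>_t = t \<pi> / (2l),
  and since distinct angles differ by at least \<pi>/(2l), the choice \<epsilon> = 1 - cos(\<pi>/(2l)) makes it
  positive exactly for (i, j) = (D+k, k). The value matrix writes a multiple of x^k - c^k into
  the (zero) second row of column D+k. The feed-forward layer then moves the second row into the
  first row with gain 1/(that multiple), and cancels it in the second row; the gain can be large,
  so it is realised by N parallel hidden units whose weights stay bounded by lM.\<close>

definition pe_angle :: "nat \<Rightarrow> nat \<Rightarrow> real" where
  "pe_angle l t = real t / real l * (pi / 2)"

definition pe_gap :: "nat \<Rightarrow> real" where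
  "pe_gap l = 1 - cos (pi / (2 * real l))"

lemma pe_gap_pos: "l \<ge> 1 \<Longrightarrow> 0 < pe_gap l"
proof -
  assume "l \<ge> 1"
  hence "0 < pi / (2 * real l)" "pi / (2 * real l) \<le> pi" by (auto simp: field_simps)
  hence "cos (pi / (2 * real l)) < cos 0" by (intro cos_monotone_0_pi) auto
  thus ?thesis by (simp add: pe_gap_def)
qed

lemma pe_gap_le_1: "l \<ge> 1 \<Longrightarrow> pe_gap l \<le> 1"
  unfolding pe_gap_def using pi_gt_zero
  by (simp, intro cos_ge_zero) (auto simp: field_simps intro: order_trans[of _ 0])

lemma cos_pe_angle_diff_le:
  assumes "t \<in> {1..l}" "j \<in> {1..l}" "t \<noteq> j"
  shows "cos (pe_angle l t - pe_angle l j) \<le> 1 - pe_gap l"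
proof -
  have l: "real l \<ge> 1" using assms by auto
  have eq: "pe_angle l t - pe_angle l j = (real t - real j) * (pi / (2 * real l))"
    by (simp add: pe_angle_def field_simps diff_divide_distrib[symmetric])
  have "\<bar>real t - real j\<bar> \<ge> 1" using assms(3) by (cases "t < j") auto
  moreover have "\<bar>real t - real j\<bar> \<le> real l" using assms(1,2) by auto
  ultimately have "pi / (2 * real l) \<le> \<bar>pe_angle l t - pe_angle l j\<bar>"
                  "\<bar>pe_angle l t - pe_angle l j\<bar> \<le> pi"
    unfolding eq abs_mult using l pi_gt_zero by (simp_all add: field_simps)
  hence "cos \<bar>pe_angle l t - pe_angle l j\<bar> \<le> cos (pi / (2 * real l))"
    using l by (subst cos_mono_le_eq) (auto simp: field_simps)
  thus ?thesis by (simp add: pe_gap_def)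
qed

lemma relu_copy_score:
  assumes i: "i \<in> {1..l}" and j: "j \<in> {1..l}" and a: "a \<in> {1..l}" and k: "k \<in> {1..l}"
    and M: "M > 0"
  shows "relu (M * M * ((cos (pe_angle l i - pe_angle l a) - 1)
                      + (cos (pe_angle l j - pe_angle l k) - 1 + pe_gap l)))
         = (if i = a \<and> j = k then M * M * pe_gap l else 0)"
proof (cases "i = a \<and> j = k")
  case True
  moreover have "0 < pe_gap l" using k by (intro pe_gap_pos) simp
  ultimately show ?thesis using M by (simp add: relu_def)
next
  case False
  have "cos (pe_angle l i - pe_angle l a) \<le> 1" "cos (pe_angle l j - pe_angle l k) \<le> 1" by auto
  moreover have "cos (pe_angle l i - pe_angle l a) \<le> 1 - pe_gap l
               \<or> cos (pe_angle l j - pe_angle l k) \<le> 1 - pe_gap l"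
    using False cos_pe_angle_diff_le[OF i a] cos_pe_angle_diff_le[OF j k] by blast
  ultimately have "(cos (pe_angle l i - pe_angle l a) - 1)
                   + (cos (pe_angle l j - pe_angle l k) - 1 + pe_gap l) \<le> 0" by linarith
  hence "M * M * ((cos (pe_angle l i - pe_angle l a) - 1)
                  + (cos (pe_angle l j - pe_angle l k) - 1 + pe_gap l)) \<le> 0"
    using M by (simp add: mult_nonneg_nonpos)
  then show ?thesis using False unfolding relu_def by (simp only: if_False max_absorb1)
qed

definition query_mat :: "real \<Rightarrow> real \<Rightarrow> nat \<Rightarrow> nat \<Rightarrow> real" where
  "query_mat M p r s =
     (if r = 0 then (if s = 2 then M * cos p else if s = 3 then M * sin p else if s = 4 then -M else 0)
      else if r = 1 then (if s = 4 then M else 0) else 0)"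

definition key_mat :: "real \<Rightarrow> real \<Rightarrow> real \<Rightarrow> nat \<Rightarrow> nat \<Rightarrow> real" where
  "key_mat M q e r s =
     (if r = 0 then (if s = 4 then M else 0)
      else if r = 1 then (if s = 2 then M * cos q else if s = 3 then M * sin q
                          else if s = 4 then M * (e - 1) else 0)
      else 0)"

definition value_mat :: "real \<Rightarrow> real \<Rightarrow> nat \<Rightarrow> nat \<Rightarrow> real" where
  "value_mat b cc r s = (if r = 1 then (if s = 0 then b else if s = 4 then - b * cc else 0) else 0)"

definition copy_head :: "nat \<Rightarrow> real \<Rightarrow> real \<Rightarrow> nat \<Rightarrow> nat \<Rightarrow> real \<Rightarrow>
    (nat \<Rightarrow> nat \<Rightarrow> real) \<times> (nat \<Rightarrow> nat \<Rightarrow> real) \<times> (nat \<Rightarrow> nat \<Rightarrow> real)" where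
  "copy_head l M b a k cc =
     (query_mat M (pe_angle l a), key_mat M (pe_angle l k) (pe_gap l), value_mat b cc)"

lemma sum_lessThan_5: "(\<Sum>s<(5::nat). f s) = f 0 + f 1 + f 2 + f 3 + (f 4 :: real)"
  by (simp add: eval_nat_numeral)

lemma copy_head_score:
  "(\<Sum>s<5. mv 5 (query_mat M p) (col (struct_emb l y) i) s
           * mv 5 (key_mat M q e) (col (struct_emb l y) j) s)
   = M * M * ((cos (pe_angle l i - p) - 1) + (cos (pe_angle l j - q) - 1 + e))"
  by (simp add: sum_lessThan_5 mv_def col_def struct_emb_def query_mat_def key_mat_def
      pe_angle_def cos_diff algebra_simps)

lemma value_mat_apply:
  "mv 5 (value_mat b cc) (col (struct_emb l y) j) r = (if r = 1 then b * (y j - cc) else 0)"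
  by (simp add: sum_lessThan_5 mv_def col_def struct_emb_def value_mat_def algebra_simps)

lemma attn_head_copy_head:
  assumes i: "i \<in> {1..l}" and a: "a \<in> {1..l}" and k: "k \<in> {1..l}" and M: "M > 0"
  shows "attn_head (copy_head l M b a k cc) l (struct_emb l y) r i
         = (if r = 1 \<and> i = a then M * M * pe_gap l * b * (y k - cc) else 0)"
proof -
  have "attn_head (copy_head l M b a k cc) l (struct_emb l y) r i
     = (\<Sum>j=1..l. (if i = a \<and> j = k then M * M * pe_gap l else 0)
                  * (if r = 1 then b * (y j - cc) else 0))"
    unfolding attn_head_def copy_head_def prod.case copy_head_score value_mat_apply
    by (intro sum.cong refl, subst relu_copy_score[OF i _ a k M]) auto
  also have "\<dots> = (\<Sum>j=1..l. if j = k then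
                    (if r = 1 \<and> i = a then M * M * pe_gap l * b * (y k - cc) else 0) else 0)"
    by (intro sum.cong refl) auto
  also have "\<dots> = (if r = 1 \<and> i = a then M * M * pe_gap l * b * (y k - cc) else 0)"
    using k by (subst sum.delta) auto
  finally show ?thesis .
qed

definition shift_heads :: "nat \<Rightarrow> real \<Rightarrow> real \<Rightarrow> (nat \<Rightarrow> real) \<Rightarrow>
    ((nat \<Rightarrow> nat \<Rightarrow> real) \<times> (nat \<Rightarrow> nat \<Rightarrow> real) \<times> (nat \<Rightarrow> nat \<Rightarrow> real)) list" where
  "shift_heads D M b c = map (\<lambda>k. copy_head (2 * D) M b (D + k) k (c k)) [1..<D + 1]"

lemma mha_shift_heads:
  assumes i: "i \<in> {1..2 * D}" and M: "M > 0"
  shows "mha (shift_heads D M b c) (2 * D) (struct_emb (2 * D) y) r i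
         = (if r = 1 \<and> D < i then M * M * pe_gap (2 * D) * b * (y (i - D) - c (i - D)) else 0)"
    (is "_ = ?v")
proof -
  have "mha (shift_heads D M b c) (2 * D) (struct_emb (2 * D) y) r i
      = (\<Sum>k\<in>{1..<D + 1}. attn_head (copy_head (2 * D) M b (D + k) k (c k)) (2 * D)
                                    (struct_emb (2 * D) y) r i)"
    unfolding mha_def shift_heads_def map_map o_def interv_sum_list_conv_sum_set_nat set_upt ..
  also have "\<dots> = (\<Sum>k\<in>{1..<D + 1}. if k = i - D then ?v else 0)"
    using i by (intro sum.cong refl, subst attn_head_copy_head[OF i _ _ M]) auto
  also have "\<dots> = ?v"
    using i by (subst sum.delta) auto
  finally show ?thesis .
qed

lemma shift_heads_bounded:
  assumes "0 \<le> M" "M \<le> B" "0 \<le> b" "b \<le> 1" "b \<le> B" and c: "\<forall>k\<in>{1..D}. b * \<bar>c k\<bar> \<le> B"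
  shows "\<forall>(Q, K, V) \<in> set (shift_heads D M b c). \<forall>r<5. \<forall>s<5.
           \<bar>Q r s\<bar> \<le> B \<and> \<bar>K r s\<bar> \<le> B \<and> \<bar>V r s\<bar> \<le> B"
proof -
  have trig: "\<bar>M * cos p\<bar> \<le> B" "\<bar>M * sin p\<bar> \<le> B" for p
    using assms by (auto simp: abs_mult intro: order_trans[OF mult_left_le])
  have "\<bar>pe_gap (2 * D) - 1\<bar> \<le> 1" if "D \<ge> 1"
    using pe_gap_pos[of "2 * D"] pe_gap_le_1[of "2 * D"] that by auto
  hence "\<bar>M * (pe_gap (2 * D) - 1)\<bar> \<le> B" if "D \<ge> 1"
    using that assms by (auto simp: abs_mult intro: order_trans[OF mult_left_le])
  with trig show ?thesis
    using assms by (auto simp: shift_heads_def copy_head_def query_mat_def key_mat_def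
        value_mat_def abs_mult)
qed

definition transfer_W1 :: "real \<Rightarrow> nat \<Rightarrow> nat \<Rightarrow> real" where
  "transfer_W1 B k j = (if j = 1 then (if k = 0 then B else -B) else 0)"

definition transfer_W2 :: "real \<Rightarrow> nat \<Rightarrow> nat \<Rightarrow> nat \<Rightarrow> real" where
  "transfer_W2 B N i k = (if i < N then (if k = 0 then B else 0) else (if k = 1 then B else 0))"

definition transfer_W3 :: "real \<Rightarrow> real \<Rightarrow> nat \<Rightarrow> nat \<Rightarrow> nat \<Rightarrow> real" where
  "transfer_W3 g h N r i =
     (if r = 0 then (if i < N then g else -g) else if r = 1 then (if i < N then -h else h) else 0)"

lemma ffn3_transfer:
  assumes B: "B \<ge> 0"
  shows "ffn3 2 (2 * N) (transfer_W1 B) (\<lambda>_. 0) (transfer_W2 B N) (\<lambda>_. 0)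
           (transfer_W3 g h N) (\<lambda>_. 0) v r
         = (if r = 0 then real N * g * B * B * v 1
            else if r = 1 then - real N * h * B * B * v 1 else 0)"
proof -
  define y0 where "y0 = relu (B * v 1)"
  define y1 where "y1 = relu (- (B * v 1))"
  have y: "y0 \<ge> 0" "y1 \<ge> 0" "y0 - y1 = B * v 1" unfolding y0_def y1_def relu_def by auto
  have layer1: "(\<lambda>k. relu (mv 5 (transfer_W1 B) v k + 0)) = (\<lambda>k. if k = 0 then y0 else y1)"
    by (rule ext) (simp add: mv_def transfer_W1_def sum_lessThan_5 y0_def y1_def)
  have layer2: "(\<lambda>j. relu (mv 2 (transfer_W2 B N) (\<lambda>k. if k = 0 then y0 else y1) j + 0))
      = (\<lambda>j. if j < N then B * y0 else B * y1)"
    using y B by (intro ext) (simp add: mv_def transfer_W2_def eval_nat_numeral relu_def)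
  have split: "(\<Sum>i<2 * N. f i) = (\<Sum>i\<in>{0..<N}. f i) + (\<Sum>i\<in>{N..<2 * N}. f i)"
    for f :: "nat \<Rightarrow> real"
    by (simp add: atLeast0LessThan[symmetric] sum.atLeastLessThan_concat)
  have layer3: "mv (2 * N) (transfer_W3 g h N) (\<lambda>j. if j < N then B * y0 else B * y1) r
     = (if r = 0 then real N * g * B * (y0 - y1)
        else if r = 1 then - real N * h * B * (y0 - y1) else 0)"
    unfolding mv_def split by (simp add: transfer_W3_def algebra_simps)
  show ?thesis unfolding ffn3_def layer1 layer2 layer3 using y by (simp add: algebra_simps)
qed

lemma transfer_gain_exists:
  assumes B: "B > 0" and G: "G > 0"
  obtains N g h where "0 \<le> g" "g \<le> B" "0 \<le> h" "h \<le> B"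
    "real N * g * B * B = G" "real N * h * B * B = 1"
proof
  define N where "N = nat \<lceil>(G + 1) / B ^ 3\<rceil>"
  have "real N \<ge> (G + 1) / B ^ 3" unfolding N_def by (rule real_nat_ceiling_ge)
  hence NB: "real N * B ^ 3 \<ge> G + 1" using B by (simp add: field_simps)
  hence N: "real N > 0" using G B
    by (smt (verit) mult_nonpos_nonneg of_nat_0_le_iff zero_less_power)
  show "0 \<le> G / (real N * B * B)" "0 \<le> 1 / (real N * B * B)" using N B G by auto
  show "G / (real N * B * B) \<le> B" "1 / (real N * B * B) \<le> B"
    using NB N B G by (simp_all add: field_simps power3_eq_cube)
  show "real N * (G / (real N * B * B)) * B * B = G" "real N * (1 / (real N * B * B)) * B * B = 1"
    using N B by (simp_all add: field_simps)
qed

lemma tblock_shift_transfer: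
  assumes t: "t \<in> {1..2 * D}" and r: "r < 5" and M: "M > 0" and B: "B \<ge> 0"
    and gain_g: "real N * g * B * B * (M * M * pe_gap (2 * D) * b) = 1"
    and gain_h: "real N * h * B * B = 1"
  shows "tblock (shift_heads D M b c) 2 (2 * N) (transfer_W1 B) (\<lambda>_. 0) (transfer_W2 B N) (\<lambda>_. 0)
           (transfer_W3 g h N) (\<lambda>_. 0) (2 * D) (struct_emb (2 * D) (\<lambda>t. if t \<le> D then x t else 0)) r t
         = struct_emb (2 * D) (\<lambda>t. if t \<le> D then x t else x (t - D) - c (t - D)) r t"
proof -
  let ?s = "M * M * pe_gap (2 * D) * b"
  let ?H = "struct_emb (2 * D) (\<lambda>t. if t \<le> D then x t else 0)"
  have second_row: "mha (shift_heads D M b c) (2 * D) ?H 1 t + ?H 1 t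
      = (if D < t then ?s * (x (t - D) - c (t - D)) else 0)"
    using mha_shift_heads[OF t M] t by (simp add: struct_emb_def le_diff_conv)
  show ?thesis
    unfolding tblock_def Let_def ffn3_transfer[OF B] col_def second_row mha_shift_heads[OF t M]
    using t r gain_g gain_h
    by (cases "t \<le> D") (auto simp: struct_emb_def mult.assoc[symmetric])
qed

lemma shift_subtract_block_exists_pos:
  assumes M: "M > 0" and D: "D \<ge> 1" and c: "\<forall>k\<in>{1..D}. \<bar>c k\<bar> \<le> M / 2"
  shows "\<exists>heads n1 n2 W1 b1 W2 b2 W3 b3.
           length heads = D \<and>
           params_bounded (real (2 * D) * M) heads n1 n2 W1 b1 W2 b2 W3 b3 \<and>
           (\<forall>x::nat \<Rightarrow> real. \<forall>r<5. \<forall>t\<in>{1..2 * D}.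
              tblock heads n1 n2 W1 b1 W2 b2 W3 b3 (2 * D)
                 (struct_emb (2 * D) (\<lambda>t. if t \<le> D then x t else 0)) r t
              = struct_emb (2 * D) (\<lambda>t. if t \<le> D then x t else x (t - D) - c (t - D)) r t)"
proof -
  define B where "B = real (2 * D) * M"
  define b where "b = min 1 M"
  define s where "s = M * M * pe_gap (2 * D) * b"
  have MB: "M \<le> B" unfolding B_def using D M by (simp add: mult_le_cancel_right1)
  have B: "B > 0" using M D unfolding B_def by simp
  have b: "0 < b" "b \<le> 1" "b \<le> M" unfolding b_def using M by auto
  have s: "s > 0" unfolding s_def using M b pe_gap_pos[of "2 * D"] D by simp
  then obtain N g h where g: "0 \<le> g" "g \<le> B" and h: "0 \<le> h" "h \<le> B"
    and gain_g: "real N * g * B * B = 1 / s" and gain_h: "real N * h * B * B = 1"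
    using transfer_gain_exists[OF B, of "1 / s"] by (metis zero_less_divide_1_iff)
  have "b * \<bar>c k\<bar> \<le> B" if "k \<in> {1..D}" for k
  proof -
    have "b * \<bar>c k\<bar> \<le> 1 * (M / 2)" using c that b by (intro mult_mono) auto
    thus ?thesis using MB M by simp
  qed
  hence heads: "\<forall>(Q, K, V) \<in> set (shift_heads D M b c). \<forall>r<5. \<forall>s<5.
                  \<bar>Q r s\<bar> \<le> B \<and> \<bar>K r s\<bar> \<le> B \<and> \<bar>V r s\<bar> \<le> B"
    using M MB b by (intro shift_heads_bounded) auto
  have "params_bounded B (shift_heads D M b c) 2 (2 * N) (transfer_W1 B) (\<lambda>_. 0)
           (transfer_W2 B N) (\<lambda>_. 0) (transfer_W3 g h N) (\<lambda>_. 0)"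
    unfolding params_bounded_def
    by (intro conjI heads) (use B g h in \<open>auto simp: transfer_W1_def transfer_W2_def transfer_W3_def\<close>)
  moreover have "length (shift_heads D M b c) = D" by (simp add: shift_heads_def)
  moreover have "real N * g * B * B * (M * M * pe_gap (2 * D) * b) = 1"
    using gain_g s by (simp add: s_def[symmetric])
  then have "\<forall>x. \<forall>r<5. \<forall>t\<in>{1..2 * D}.
      tblock (shift_heads D M b c) 2 (2 * N) (transfer_W1 B) (\<lambda>_. 0) (transfer_W2 B N) (\<lambda>_. 0)
        (transfer_W3 g h N) (\<lambda>_. 0) (2 * D) (struct_emb (2 * D) (\<lambda>t. if t \<le> D then x t else 0)) r t
      = struct_emb (2 * D) (\<lambda>t. if t \<le> D then x t else x (t - D) - c (t - D)) r t"
    using tblock_shift_transfer[OF _ _ M less_imp_le[OF B] _ gain_h] by blast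
  ultimately show ?thesis unfolding B_def by blast
qed

lemma shift_subtract_block_exists:
  assumes M: "M > 0" and c: "\<forall>k\<in>{1..D}. \<bar>c k\<bar> \<le> M / 2"
  shows "\<exists>heads n1 n2 W1 b1 W2 b2 W3 b3.
           length heads = D \<and>
           params_bounded (real (2 * D) * M) heads n1 n2 W1 b1 W2 b2 W3 b3 \<and>
           (\<forall>x::nat \<Rightarrow> real. \<forall>r<5. \<forall>t\<in>{1..2 * D}.
              tblock heads n1 n2 W1 b1 W2 b2 W3 b3 (2 * D)
                 (struct_emb (2 * D) (\<lambda>t. if t \<le> D then x t else 0)) r t
              = struct_emb (2 * D) (\<lambda>t. if t \<le> D then x t else x (t - D) - c (t - D)) r t)"
proof (cases "D = 0")
  case True
  have "params_bounded 0 [] 0 0 (\<lambda>_ _. 0) (\<lambda>_. 0) (\<lambda>_ _. 0) (\<lambda>_. 0) (\<lambda>_ _. 0) (\<lambda>_. 0)"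
    by (simp add: params_bounded_def)
  with True show ?thesis by fastforce
next
  case False
  then show ?thesis using shift_subtract_block_exists_pos[OF M _ c] by simp
qed

theorem lemma5:
  shows "\<exists>C>0. \<forall>(M::real) (D::nat) (c::nat \<Rightarrow> real). M > 0 \<longrightarrow>
     (\<forall>k\<in>{1..D}. \<bar>c k\<bar> \<le> M / 2) \<longrightarrow>
     (\<exists>heads n1 n2 W1 b1 W2 b2 W3 b3.
        length heads = D \<and>
        params_bounded (C * real (2 * D) * M) heads n1 n2 W1 b1 W2 b2 W3 b3 \<and>
        (\<forall>x::nat \<Rightarrow> real.
           maxnorm (2 * D) (struct_emb (2 * D) (\<lambda>t. if t \<le> D then x t else 0)) \<le> M / 2 \<longrightarrow>
           (\<forall>r<5. \<forall>t\<in>{1..2 * D}.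
              tblock heads n1 n2 W1 b1 W2 b2 W3 b3 (2 * D)
                 (struct_emb (2 * D) (\<lambda>t. if t \<le> D then x t else 0)) r t
              = struct_emb (2 * D) (\<lambda>t. if t \<le> D then x t else x (t - D) - c (t - D)) r t)))"
proof (intro exI[of _ "1::real"] conjI allI impI)
  fix M :: real and D :: nat and c :: "nat \<Rightarrow> real"
  assume "M > 0" "\<forall>k\<in>{1..D}. \<bar>c k\<bar> \<le> M / 2"
  \<comment> \<open>The construction does not need the bound on the entries of H.\<close>
  from shift_subtract_block_exists[OF this] show "\<exists>heads n1 n2 W1 b1 W2 b2 W3 b3.
      length heads = D \<and>
      params_bounded (1 * real (2 * D) * M) heads n1 n2 W1 b1 W2 b2 W3 b3 \<and>
      (\<forall>x::nat \<Rightarrow> real.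
         maxnorm (2 * D) (struct_emb (2 * D) (\<lambda>t. if t \<le> D then x t else 0)) \<le> M / 2 \<longrightarrow>
         (\<forall>r<5. \<forall>t\<in>{1..2 * D}.
            tblock heads n1 n2 W1 b1 W2 b2 W3 b3 (2 * D)
               (struct_emb (2 * D) (\<lambda>t. if t \<le> D then x t else 0)) r t
            = struct_emb (2 * D) (\<lambda>t. if t \<le> D then x t else x (t - D) - c (t - D)) r t))"
    by simp blast
qed simp

end
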